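(* Let $q>27$ be an odd prime power and let $k$ be an integer satisfying $$(q^2-q+1)\left\lceil\frac{8(q+1)}{q-1}\log q\right\rceil\leq k\leq q^3+1,$$ where $\log$ denotes the natural logarithm. Then $\mathrm{PG}(2,q^2)$ contains semiovals of size $k$.
   Context: $\mathrm{PG}(2,q^2)$ is the Desarguesian projective plane over $\mathbb{F}_{q^2}$. A semioval is a non-empty pointset $\mathcal{S}$ such that for every $P\in\mathcal{S}$ there is a unique line $t_P$ with $\mathcal{S}\cap t_P=\{P\}$. *)

theory Defs
  imports Complex_Main "HOL-Computational_Algebra.Primes"
begin

text \<open>The Desarguesian projective plane PG(2,F) over a field F: points are
  the one-dimensional subspaces of F^3 (represented as the set of nonzero
  scalar multiples of a nonzero vector), lines are given by nonzero
  coefficient triples (a,b,c) and consist of the points satisfying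
  a x + b y + c z = 0.\<close>

definition proj_class :: "'a::field \<times> 'a \<times> 'a \<Rightarrow> ('a \<times> 'a \<times> 'a) set" where
  "proj_class v = {(c * fst v, c * fst (snd v), c * snd (snd v)) | c. c \<noteq> 0}"

definition pg_points :: "('a::field \<times> 'a \<times> 'a) set set" where
  "pg_points = {proj_class v | v. v \<noteq> (0, 0, 0)}"

definition pg_line :: "'a::field \<times> 'a \<times> 'a \<Rightarrow> ('a \<times> 'a \<times> 'a) set set" where
  "pg_line u = {P \<in> pg_points. \<exists>(x, y, z) \<in> P.
      fst u * x + fst (snd u) * y + snd (snd u) * z = 0}"

definition pg_lines :: "('a::field \<times> 'a \<times> 'a) set set set" where
  "pg_lines = {pg_line u | u. u \<noteq> (0, 0, 0)}"

definition semioval :: "('a::field \<times> 'a \<times> 'a) set set \<Rightarrow> bool" where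
  "semioval S \<longleftrightarrow> S \<noteq> {} \<and> S \<subseteq> pg_points \<and>
     (\<forall>P \<in> S. \<exists>!t. t \<in> pg_lines \<and> S \<inter> t = {P})"

end

theory Submission
  imports Defs "HOL-Computational_Algebra.Polynomial" "HOL-Algebra.FiniteProduct"
begin

text \<open>The Hermitian curve H of PG(2, q^2) has q^3 + 1 points, every line meets it in 1 or
  q + 1 points, and every point of H lies on exactly one tangent. Hence a subset X of H is a
  semioval as soon as, for every secant l and every P in l \<inter> H, the set X meets (l \<inter> H) - {P}:
  then the only line meeting X in P alone is the tangent to H at P. A k-subset of this kind exists
  by counting: there are at most q^6 (q + 1) sets (l \<inter> H) - {P}, each of size q, and each is
  avoided by C(q^3 + 1 - q, k) \<le> (1 - k / (q^3 + 1))^q C(q^3 + 1, k) of the k-subsets of H;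
  the hypothesis on k makes the factor (1 - k / (q^3 + 1))^q at most exp (- 8 ln q) = q^-8.\<close>

lemma power_card_UNIV_eq_self: "(x :: 'a::{field,finite}) ^ card (UNIV :: 'a set) = x"
proof (cases "x = 0")
  case False
  define G where "G = \<lparr>carrier = UNIV - {0 :: 'a}, monoid.mult = (*), one = 1 :: 'a\<rparr>"
  interpret comm_group G
  proof (rule comm_groupI)
    fix y assume "y \<in> carrier G"
    then show "\<exists>z\<in>carrier G. z \<otimes>\<^bsub>G\<^esub> y = \<one>\<^bsub>G\<^esub>"
      by (intro bexI[of _ "inverse y"]) (auto simp: G_def)
  qed (auto simp: G_def)
  have pow: "y [^]\<^bsub>G\<^esub> n = y ^ n" for y and n :: nat
    by (induction n) (simp_all add: G_def)
  have "x [^]\<^bsub>G\<^esub> card (carrier G) = \<one>\<^bsub>G\<^esub>"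
    by (rule power_order_eq_one) (use False in \<open>simp_all add: G_def\<close>)
  then have "x ^ (card (UNIV :: 'a set) - 1) = 1"
    unfolding pow by (simp add: G_def card_Diff_singleton)
  moreover have "card (UNIV :: 'a set) = Suc (card (UNIV :: 'a set) - 1)"
    using finite_UNIV_card_ge_0[where ?'a = 'a] by simp
  ultimately show ?thesis
    by (metis mult.right_neutral power_Suc)
qed (use finite_UNIV_card_ge_0[where ?'a = 'a] in simp)

lemma card_roots_binomial_le:
  fixes c b :: "'a::idom"
  assumes "e < d"
  shows "card {x. x ^ d = c * x ^ e + b} \<le> d"
proof -
  define p where "p = monom 1 d - monom c e - [:b:]"
  have roots: "poly p x = 0 \<longleftrightarrow> x ^ d = c * x ^ e + b" for x
    by (auto simp: p_def poly_monom algebra_simps)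
  have "coeff p d = 1"
    using assms by (cases d) (simp_all add: p_def coeff_monom)
  then have "p \<noteq> 0"
    by auto
  have "degree p \<le> d"
    unfolding p_def using assms
    by (intro degree_diff_le degree_monom_le) (auto intro: degree_monom_le order.trans)
  with card_poly_roots_bound[OF \<open>p \<noteq> 0\<close>] roots show ?thesis
    by simp
qed

lemma card_eq_card_image_mult_fibre:
  assumes "finite A" "\<And>b. b \<in> f ` A \<Longrightarrow> card {x\<in>A. f x = b} = c"
  shows "card A = card (f ` A) * c"
proof -
  have "A = (\<Union>b\<in>f ` A. {x\<in>A. f x = b})"
    by auto
  also have "card \<dots> = (\<Sum>b\<in>f ` A. card {x\<in>A. f x = b})"
    by (rule card_UN_disjoint) (use assms(1) in auto)
  also have "\<dots> = card (f ` A) * c"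
    using assms(2) by simp
  finally show ?thesis .
qed

lemma uniform_fibres_saturate:
  assumes "finite A" "finite B" "f ` A \<subseteq> B" "card B \<le> m" "c \<le> n" "card A = m * n" "0 < m" "0 < n"
    and fibre: "\<And>b. b \<in> f ` A \<Longrightarrow> card {x\<in>A. f x = b} = c"
  shows "f ` A = B" "c = n"
proof -
  have image_le: "card (f ` A) \<le> m"
    using card_mono[OF assms(2,3)] assms(4) by linarith
  have prod: "card (f ` A) * c = m * n"
    using card_eq_card_image_mult_fibre[OF assms(1) fibre] assms(6) by simp
  have "m * n \<le> card (f ` A) * n"
    using prod assms(5) by (metis mult_le_mono2)
  then have "card (f ` A) = m"
    using image_le \<open>0 < n\<close> by simp
  with prod \<open>0 < m\<close> show "c = n"
    by simp
  show "f ` A = B"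
    using \<open>card (f ` A) = m\<close> assms(2-4) by (intro card_seteq) simp_all
qed

lemma of_nat_card_UNIV_eq_0: "of_nat (card (UNIV :: 'a::{ring_1,finite} set)) = (0 :: 'a)"
proof -
  have "(\<Sum>x\<in>(UNIV :: 'a set). x + 1) = (\<Sum>x\<in>UNIV. x)"
    by (rule sum.reindex_bij_witness[of _ "\<lambda>x. x - 1" "\<lambda>x. x + 1"]) auto
  then show ?thesis
    by (simp add: sum.distrib)
qed

lemma CHAR_eq_if_card_UNIV_prime_power:
  assumes "prime p" "card (UNIV :: 'a::{field,finite} set) = p ^ m"
  shows "CHAR('a) = p"
proof -
  have "prime CHAR('a)"
    by (intro prime_CHAR_semidom finite_imp_CHAR_pos) simp
  moreover have "CHAR('a) dvd p ^ m"
    using of_nat_card_UNIV_eq_0[where 'a = 'a] assms(2) by (metis of_nat_eq_0_iff_char_dvd)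
  ultimately show ?thesis
    using assms(1) by (metis prime_dvd_power primes_dvd_imp_eq)
qed

lemma choose_diff_le_power_mult_choose:
  assumes "k \<le> v" "r \<le> v"
  shows "real ((v - r) choose k) \<le> (1 - real k / real v) ^ r * real (v choose k)"
  using assms(2)
proof (induction r)
  case 0
  then show ?case by simp
next
  case (Suc r)
  define n where "n = v - r"
  have n: "1 \<le> n" "n \<le> v" "v - Suc r = n - 1"
    using Suc.prems by (auto simp: n_def)
  have ratio_nonneg: "0 \<le> 1 - real k / real v"
    using assms(1) n by (simp add: field_simps)
  have IH: "real (n choose k) \<le> (1 - real k / real v) ^ r * real (v choose k)"
    using Suc by (simp add: n_def)
  show ?case
  proof (cases "k \<le> n")
    case True
    have "real (n - k) * real (n choose k) = real n * real ((n - 1) choose k)"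
      by (metis binomial_absorb_comp of_nat_mult)
    then have step: "real ((n - 1) choose k) = (1 - real k / real n) * real (n choose k)"
      using n True by (simp add: of_nat_diff field_simps)
    have "1 - real k / real n \<le> 1 - real k / real v"
      using n by (simp add: frac_le)
    then have "real ((n - 1) choose k) \<le> (1 - real k / real v) * real (n choose k)"
      unfolding step by (rule mult_right_mono) simp
    also have "\<dots> \<le> (1 - real k / real v) * ((1 - real k / real v) ^ r * real (v choose k))"
      by (rule mult_left_mono[OF IH ratio_nonneg])
    finally show ?thesis
      by (simp add: n(3))
  next
    case False
    then have "real ((v - Suc r) choose k) = 0"
      using n by simp
    then show ?thesis
      unfolding \<open>real ((v - Suc r) choose k) = 0\<close> using ratio_nonneg by simp
  qed
qed

lemma ex_subset_meeting_all:
  assumes "finite H" and \<F>: "\<And>F. F \<in> \<F> \<Longrightarrow> F \<subseteq> H \<and> card F = s"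
    and less: "card \<F> * (card H - s choose k) < card H choose k"
  shows "\<exists>X \<subseteq> H. card X = k \<and> (\<forall>F\<in>\<F>. X \<inter> F \<noteq> {})"
proof -
  define missing where "missing F = {X. X \<subseteq> H - F \<and> card X = k}" for F
  have "finite \<F>"
    using \<F> \<open>finite H\<close> by (metis Pow_iff finite_Pow_iff rev_finite_subset subsetI)
  have "card (missing F) = (card H - s choose k)" if "F \<in> \<F>" for F
  proof -
    from \<F>[OF that] have "F \<subseteq> H" "card F = s"
      by auto
    with \<open>finite H\<close> have "card (H - F) = card H - s"
      by (metis card_Diff_subset finite_subset)
    then show ?thesis
      using \<open>finite H\<close> by (simp add: missing_def n_subsets)
  qed
  then have "card (\<Union>F\<in>\<F>. missing F) \<le> card \<F> * (card H - s choose k)"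
    using card_UN_le[OF \<open>finite \<F>\<close>, of missing] by simp
  also have "\<dots> < card {X. X \<subseteq> H \<and> card X = k}"
    using less \<open>finite H\<close> by (simp add: n_subsets)
  finally have "\<not> {X. X \<subseteq> H \<and> card X = k} \<subseteq> (\<Union>F\<in>\<F>. missing F)"
    using card_mono[OF finite_UN_I[OF \<open>finite \<F>\<close>]] \<open>finite H\<close>
    by (metis (no_types, lifting) finite_Diff finite_Pow_iff missing_def leD
        Collect_mono_iff Pow_def rev_finite_subset)
  then obtain X where "X \<subseteq> H" "card X = k" "X \<notin> (\<Union>F\<in>\<F>. missing F)"
    by blast
  moreover from this have "\<forall>F\<in>\<F>. X \<inter> F \<noteq> {}"
    by (auto simp: missing_def)
  ultimately show ?thesis
    by blast
qed

lemma power_mult_choose_diff_less_choose: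
  fixes q k v :: nat
  assumes "2 \<le> q" "q \<le> v" "k \<le> v" and bound: "8 * real v * ln (real q) \<le> real k * real q"
  shows "q ^ 6 * (q + 1) * ((v - q) choose k) < v choose k"
proof -
  have v: "0 < real v"
    using assms(1,2) by simp
  have ratio_nonneg: "0 \<le> 1 - real k / real v"
    using assms(3) v by (simp add: field_simps)
  have "(1 - real k / real v) ^ q \<le> exp (- (real k / real v)) ^ q"
    using exp_ge_add_one_self[of "- (real k / real v)"] ratio_nonneg by (intro power_mono) simp_all
  also have "\<dots> = exp (- (real k * real q / real v))"
    by (simp add: exp_of_nat_mult[symmetric] mult.commute)
  also have "\<dots> \<le> exp (- (8 * ln (real q)))"
    using bound v by (simp add: field_simps)
  also have "\<dots> = 1 / real q ^ 8"
  proof -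
    have "exp (8 * ln (real q)) = real q ^ 8"
      using assms(1) by (simp add: exp_of_nat_mult[of 8, simplified])
    then show ?thesis
      by (simp add: exp_minus divide_inverse)
  qed
  finally have decay: "(1 - real k / real v) ^ q \<le> 1 / real q ^ 8" .
  have "q + 1 < q ^ 2"
    using mult_le_mono1[OF assms(1), of q] assms(1) unfolding power2_eq_square by linarith
  then have "real q + 1 < real q ^ 2"
    by (metis of_nat_1 of_nat_add of_nat_less_iff of_nat_power)
  then have "real q ^ 6 * (real q + 1) < real q ^ 6 * real q ^ 2"
    using assms(1) by (intro mult_strict_left_mono) simp_all
  then have "real q ^ 6 * (real q + 1) < real q ^ 8"
    by (simp flip: power_add)
  then have factor: "real q ^ 6 * (real q + 1) / real q ^ 8 < 1"
    using assms(1) by simp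
  have "real (q ^ 6 * (q + 1) * ((v - q) choose k))
      \<le> real q ^ 6 * (real q + 1) * ((1 - real k / real v) ^ q * real (v choose k))"
    unfolding of_nat_mult of_nat_power of_nat_add of_nat_1
    using choose_diff_le_power_mult_choose[OF assms(3,2)] by (intro mult_left_mono) simp_all
  also have "\<dots> \<le> real q ^ 6 * (real q + 1) * (1 / real q ^ 8 * real (v choose k))"
    using decay by (intro mult_left_mono mult_right_mono) simp_all
  also have "\<dots> = real q ^ 6 * (real q + 1) / real q ^ 8 * real (v choose k)"
    by simp
  also have "\<dots> < 1 * real (v choose k)"
    using factor assms(3) by (intro mult_strict_right_mono) simp_all
  finally show ?thesis
    by (simp only: mult_1 of_nat_less_iff)
qed

lemma proj_class_self: "v \<in> proj_class v"
  unfolding proj_class_def by (cases v) (auto intro: exI[of _ 1])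

lemma mem_proj_class:
  "w \<in> proj_class v \<longleftrightarrow> (\<exists>c. c \<noteq> 0 \<and> w = (c * fst v, c * fst (snd v), c * snd (snd v)))"
  unfolding proj_class_def by auto

lemma proj_class_in_pg_points: "v \<noteq> (0, 0, 0) \<Longrightarrow> proj_class v \<in> pg_points"
  unfolding pg_points_def by blast

lemma proj_class_affine_eq_iff [simp]:
  "proj_class (x, y, 1) = proj_class (x', y', 1) \<longleftrightarrow> x = x' \<and> y = (y' :: 'a::field)"
proof
  assume "proj_class (x, y, 1) = proj_class (x', y', 1)"
  then have "(x', y', 1) \<in> proj_class (x, y, 1 :: 'a)"
    using proj_class_self by metis
  then show "x = x' \<and> y = y'"
    by (auto simp: mem_proj_class)
qed simp

lemma proj_class_affine_neq_infinity [simp]: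
  "proj_class (x, y, 1) \<noteq> proj_class (0, 1, 0 :: 'a::field)"
  "proj_class (0, 1, 0) \<noteq> proj_class (x, y, 1 :: 'a::field)"
proof -
  have "(0, 1, 0) \<notin> proj_class (x, y, 1 :: 'a)"
    by (auto simp: mem_proj_class)
  then show "proj_class (x, y, 1) \<noteq> proj_class (0, 1, 0 :: 'a)"
    using proj_class_self by metis
  then show "proj_class (0, 1, 0) \<noteq> proj_class (x, y, 1 :: 'a)"
    by metis
qed

lemma proj_class_in_pg_line_iff:
  fixes u v :: "'a::field \<times> 'a \<times> 'a"
  assumes "v \<noteq> (0, 0, 0)"
  shows "proj_class v \<in> pg_line u \<longleftrightarrow>
    fst u * fst v + fst (snd u) * fst (snd v) + snd (snd u) * snd (snd v) = 0"
proof
  assume "proj_class v \<in> pg_line u"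
  then obtain x y z where xyz: "(x, y, z) \<in> proj_class v" "fst u * x + fst (snd u) * y + snd (snd u) * z = 0"
    unfolding pg_line_def by auto
  then obtain c where "c \<noteq> 0" "(x, y, z) = (c * fst v, c * fst (snd v), c * snd (snd v))"
    by (auto simp: mem_proj_class)
  moreover from this have "c * (fst u * fst v + fst (snd u) * fst (snd v) + snd (snd u) * snd (snd v)) = 0"
    using xyz(2) by (simp add: algebra_simps)
  ultimately show "fst u * fst v + fst (snd u) * fst (snd v) + snd (snd u) * snd (snd v) = 0"
    by simp
next
  assume "fst u * fst v + fst (snd u) * fst (snd v) + snd (snd u) * snd (snd v) = 0"
  with assms proj_class_self[of v] show "proj_class v \<in> pg_line u"
    unfolding pg_line_def by (cases v) (auto intro!: proj_class_in_pg_points)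
qed

lemma affine_in_pg_line_iff [simp]:
  "proj_class (x, y, 1) \<in> pg_line (a, b, c) \<longleftrightarrow> a * x + b * y + c = (0 :: 'a::field)"
  by (subst proj_class_in_pg_line_iff) auto

lemma infinity_in_pg_line_iff [simp]:
  "proj_class (0, 1, 0) \<in> pg_line (a, b, c) \<longleftrightarrow> b = (0 :: 'a::field)"
  by (subst proj_class_in_pg_line_iff) auto

lemma pg_line_in_pg_lines: "u \<noteq> (0, 0, 0) \<Longrightarrow> pg_line u \<in> pg_lines"
  unfolding pg_lines_def by blast

lemma pg_line_scale:
  assumes "s \<noteq> 0"
  shows "pg_line (s * a, s * b, s * c) = pg_line (a, b, c :: 'a::field)"
proof -
  have "s * a * x + s * b * y + s * c * z = 0 \<longleftrightarrow> a * x + b * y + c * z = 0" for x y z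
    using assms by (metis (no_types) distrib_left mult.assoc mult_eq_0_iff)
  then show ?thesis
    unfolding pg_line_def by simp
qed

lemma pg_lines_cases:
  fixes l :: "('a::field \<times> 'a \<times> 'a) set set"
  assumes "l \<in> pg_lines"
  obtains (nonvertical) m b where "l = pg_line (- m, 1, - b)"
    | (vertical) c where "l = pg_line (1, 0, - c)"
    | (infinity) "l = pg_line (0, 0, 1)"
proof -
  obtain a b c where l: "l = pg_line (a, b, c)" "(a, b, c) \<noteq> (0, 0, 0)"
    using assms unfolding pg_lines_def by auto
  have normalise: "l = pg_line (a / s, b / s, c / s)" if "s \<noteq> 0" for s
    using pg_line_scale[of "1 / s" a b c] that l(1) by simp
  consider "b \<noteq> 0" | "b = 0" "a \<noteq> 0" | "b = 0" "a = 0" "c \<noteq> 0"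
    using l(2) by auto
  then show thesis
  proof cases
    case 1
    then show thesis
      using normalise[of b] nonvertical[of "- (a / b)" "- (c / b)"] by simp
  next
    case 2
    then show thesis
      using normalise[of a] vertical[of "- (c / a)"] by simp
  next
    case 3
    then show thesis
      using normalise[of c] infinity by simp
  qed
qed

lemma card_pg_lines_le:
  "card (pg_lines :: ('a::{field,finite} \<times> 'a \<times> 'a) set set set) \<le> card (UNIV :: 'a set) ^ 3"
proof -
  have "card (pg_lines :: ('a \<times> 'a \<times> 'a) set set set) \<le> card (range (pg_line :: 'a \<times> 'a \<times> 'a \<Rightarrow> _))"
    unfolding pg_lines_def by (intro card_mono) auto
  also have "\<dots> \<le> card (UNIV :: ('a \<times> 'a \<times> 'a) set)"
    by (rule card_image_le) simp
  also have "\<dots> = card (UNIV :: 'a set) ^ 3"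
    by (simp flip: UNIV_Times_UNIV add: card_cartesian_product power3_eq_cube)
  finally show ?thesis .
qed

text \<open>The Hermitian curve \<open>X\<^sup>q\<^sup>+\<^sup>1 = Y\<^sup>q Z + Y Z\<^sup>q\<close>: its affine part in the chart \<open>Z = 1\<close>,
  together with its only point \<open>(0:1:0)\<close> on the line \<open>Z = 0\<close>.\<close>

definition hermitian_curve :: "nat \<Rightarrow> ('a::field \<times> 'a \<times> 'a) set set" where
  "hermitian_curve q = {proj_class (x, y, 1) | x y. y ^ q + y = x ^ (q + 1)} \<union> {proj_class (0, 1, 0)}"

lemma hermitian_curve_subset_pg_points: "hermitian_curve q \<subseteq> pg_points"
  unfolding hermitian_curve_def by (auto intro!: proj_class_in_pg_points)

lemma pg_line_nonvertical_Int_hermitian_curve: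
  "pg_line (- m, 1, - b) \<inter> hermitian_curve q =
    (\<lambda>x. proj_class (x, m * x + b, 1)) ` {x. (m * x + b) ^ q + (m * x + b) = x ^ (q + 1)}"
proof -
  have "proj_class (x, y, 1) \<in> pg_line (- m, 1, - b) \<longleftrightarrow> y = m * x + b" for x y
    by (auto simp: algebra_simps)
  then show ?thesis
    unfolding hermitian_curve_def by auto
qed

lemma pg_line_vertical_Int_hermitian_curve:
  "pg_line (1, 0, - c) \<inter> hermitian_curve q =
    insert (proj_class (0, 1, 0)) ((\<lambda>y. proj_class (c, y, 1)) ` {y. y ^ q + y = c ^ (q + 1)})"
  unfolding hermitian_curve_def by auto

lemma pg_line_infinity_Int_hermitian_curve:
  "pg_line (0, 0, 1) \<inter> hermitian_curve q = {proj_class (0, 1, 0 :: 'a::field)}"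
  unfolding hermitian_curve_def by auto

text \<open>In a field of order \<open>q\<^sup>2\<close> this is the subfield of order \<open>q\<close>.\<close>

definition base_field :: "nat \<Rightarrow> 'a::field set" where
  "base_field q = {a. a ^ q = a}"

context
  fixes q :: nat
  assumes card_UNIV_field: "card (UNIV :: 'a::{field,finite} set) = q ^ 2"
    and frobenius_add: "\<And>x y :: 'a. (x + y) ^ q = x ^ q + y ^ q"
begin

lemma two_le_q: "2 \<le> q"
proof -
  have "card {0, 1 :: 'a} \<le> q ^ 2"
    unfolding card_UNIV_field[symmetric] by (rule card_mono) simp_all
  then have "1 < q ^ 2"
    by simp
  show ?thesis
  proof (rule ccontr)
    assume "\<not> 2 \<le> q"
    then have "q ^ 2 \<le> 1 ^ 2"
      by (intro power_mono) simp_all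
    with \<open>1 < q ^ 2\<close> show False
      by simp
  qed
qed

lemma frobenius_involution: "((x :: 'a) ^ q) ^ q = x"
proof -
  have "x ^ card (UNIV :: 'a set) = x"
    by (rule power_card_UNIV_eq_self)
  then show ?thesis
    by (simp only: card_UNIV_field power2_eq_square power_mult)
qed

lemma frobenius_diff: "((x :: 'a) - y) ^ q = x ^ q - y ^ q"
proof -
  have "(y + (x - y)) ^ q = y ^ q + (x - y) ^ q"
    by (rule frobenius_add)
  then show ?thesis
    by simp
qed

lemma base_field_add: "a \<in> base_field q \<Longrightarrow> b \<in> base_field q \<Longrightarrow> (a :: 'a) + b \<in> base_field q"
  by (simp add: base_field_def frobenius_add)

lemma trace_in_base_field: "(y :: 'a) ^ q + y \<in> base_field q"
  by (simp add: base_field_def frobenius_add frobenius_involution add.commute)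

lemma norm_in_base_field: "(x :: 'a) ^ (q + 1) \<in> base_field q"
proof -
  have "(x ^ (q + 1)) ^ q = (x ^ q) ^ q * x ^ q"
    by (simp add: power_mult_distrib flip: power_mult)
  then show ?thesis
    by (simp add: base_field_def frobenius_involution)
qed

lemma card_base_field_le: "card (base_field q :: 'a set) \<le> q"
  using card_roots_binomial_le[of 1 q "1 :: 'a" 0] two_le_q by (simp add: base_field_def)

lemma zero_in_base_field: "(0 :: 'a) \<in> base_field q"
  using two_le_q by (simp add: base_field_def)

text \<open>Trace and norm are homomorphisms whose kernels and images are bounded by root counting;
  since \<open>q\<^sup>2 = q \<cdot> q\<close> and \<open>q\<^sup>2 - 1 = (q - 1)(q + 1)\<close>, both bounds are attained.\<close>

lemma card_trace_fibre:
  assumes "a \<in> base_field q"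
  shows "card {y :: 'a. y ^ q + y = a} = q"
proof -
  define T where "T y = y ^ q + y" for y :: 'a
  define Z where "Z = {z. T z = 0}"
  have T_add: "T (x + y) = T x + T y" for x y
    by (simp add: T_def frobenius_add)
  have "Z = {x. x ^ q = (- 1) * x ^ 1 + (0 :: 'a)}"
    by (auto simp: Z_def T_def eq_neg_iff_add_eq_0)
  then have "card Z \<le> q"
    using card_roots_binomial_le[of 1 q "- 1 :: 'a" 0] two_le_q by simp
  have fibre: "card {x\<in>UNIV. T x = b} = card Z" if b: "b \<in> range T" for b
  proof -
    obtain y0 where "b = T y0"
      using b by blast
    have "{x\<in>UNIV. T x = b} = (\<lambda>z. y0 + z) ` Z"
    proof (rule equalityI; rule subsetI)
      fix x
      assume "x \<in> {x\<in>UNIV. T x = b}"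
      then have "T (x - y0) = 0"
        using T_add[of "x - y0" y0] \<open>b = T y0\<close> by simp
      then show "x \<in> (\<lambda>z. y0 + z) ` Z"
        unfolding Z_def by (intro image_eqI[of _ _ "x - y0"]) auto
    next
      fix x
      assume "x \<in> (\<lambda>z. y0 + z) ` Z"
      then show "x \<in> {x\<in>UNIV. T x = b}"
        using T_add \<open>b = T y0\<close> by (auto simp: Z_def)
    qed
    then show ?thesis
      by (simp add: card_image)
  qed
  have "range T = base_field q" "card Z = q"
    using uniform_fibres_saturate[OF _ _ _ card_base_field_le \<open>card Z \<le> q\<close> _ _ _ fibre]
      trace_in_base_field two_le_q by (auto simp: T_def card_UNIV_field power2_eq_square)
  then show ?thesis
    using fibre[of a] assms by (simp add: T_def)
qed

lemma card_norm_fibre: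
  assumes "a \<in> base_field q" "a \<noteq> 0"
  shows "card {x :: 'a. x ^ (q + 1) = a} = q + 1"
proof -
  define N where "N x = x ^ (q + 1)" for x :: 'a
  define Z where "Z = {z. N z = 1}"
  define A where "A = (UNIV :: 'a set) - {0}"
  have N_mult: "N (x * y) = N x * N y" for x y
    by (simp add: N_def power_mult_distrib)
  have "Z = {x. x ^ (q + 1) = 0 * x ^ 0 + (1 :: 'a)}"
    by (auto simp: Z_def N_def)
  then have "card Z \<le> q + 1"
    using card_roots_binomial_le[of 0 "q + 1" "0 :: 'a" 1] by simp
  have fibre: "card {x\<in>A. N x = b} = card Z" if b: "b \<in> N ` A" for b
  proof -
    obtain y0 where "b = N y0" "y0 \<noteq> 0"
      using b by (auto simp: A_def)
    have "{x\<in>A. N x = b} = (\<lambda>z. y0 * z) ` Z"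
    proof (rule equalityI; rule subsetI)
      fix x
      assume "x \<in> {x\<in>A. N x = b}"
      then have "N (x / y0) = 1"
        using \<open>b = N y0\<close> \<open>y0 \<noteq> 0\<close> by (auto simp: N_def power_divide)
      then show "x \<in> (\<lambda>z. y0 * z) ` Z"
        unfolding Z_def using \<open>y0 \<noteq> 0\<close> by (intro image_eqI[of _ _ "x / y0"]) auto
    next
      fix x
      assume "x \<in> (\<lambda>z. y0 * z) ` Z"
      then obtain z where "N z = 1" "x = y0 * z"
        by (auto simp: Z_def)
      then show "x \<in> {x\<in>A. N x = b}"
        using N_mult[of y0 z] \<open>b = N y0\<close> \<open>y0 \<noteq> 0\<close> by (auto simp: A_def N_def)
    qed
    then show ?thesis
      using \<open>y0 \<noteq> 0\<close> by (simp add: card_image inj_on_def)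
  qed
  have "card A = q * q - 1"
    by (simp add: A_def card_UNIV_field card_Diff_singleton power2_eq_square)
  also have "q * q - 1 = (q - 1) * (q + 1)"
    by (cases q) simp_all
  finally have card_A: "card A = (q - 1) * (q + 1)" .
  have "card (base_field q - {0 :: 'a}) \<le> q - 1"
    using card_base_field_le zero_in_base_field by (simp add: card_Diff_singleton)
  moreover have "N ` A \<subseteq> base_field q - {0}"
    using norm_in_base_field by (auto simp: N_def A_def)
  ultimately have "N ` A = base_field q - {0}" "card Z = q + 1"
    using uniform_fibres_saturate[OF _ _ _ _ \<open>card Z \<le> q + 1\<close> card_A _ _ fibre] two_le_q
    by simp_all
  with fibre[of a] assms have "card {x\<in>A. N x = a} = q + 1"
    by simp
  moreover have "{x\<in>A. N x = a} = {x. x ^ (q + 1) = a}"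
    using assms(2) by (auto simp: A_def N_def)
  ultimately show ?thesis
    by simp
qed

text \<open>On the line \<open>y = m x + b\<close>, shifting \<open>x\<close> by \<open>m\<^sup>q\<close> turns the curve equation into a norm
  equation.\<close>

lemma hermitian_nonvertical_iff:
  fixes m x b :: 'a
  shows "(m * x + b) ^ q + (m * x + b) = x ^ (q + 1) \<longleftrightarrow>
    (x - m ^ q) ^ (q + 1) = b ^ q + b + m ^ (q + 1)"
proof -
  have "(x - m ^ q) ^ q = x ^ q - m"
    by (simp add: frobenius_diff frobenius_involution)
  then have "(x - m ^ q) ^ (q + 1) = (x ^ q - m) * (x - m ^ q)"
    by (simp add: mult.commute)
  moreover have "(m * x + b) ^ q = m ^ q * x ^ q + b ^ q"
    by (simp add: frobenius_add power_mult_distrib)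
  moreover have "(x ^ q - m) * (x - m ^ q) - (b ^ q + b + m ^ q * m)
      = x ^ q * x - (m ^ q * x ^ q + b ^ q + (m * x + b))"
    by (simp add: algebra_simps)
  ultimately show ?thesis
    by (metis right_minus_eq power_Suc2 Suc_eq_plus1)
qed

lemma hermitian_nonvertical_roots:
  "{x :: 'a. (m * x + b) ^ q + (m * x + b) = x ^ (q + 1)}
    = (\<lambda>w. w + m ^ q) ` {w. w ^ (q + 1) = b ^ q + b + m ^ (q + 1)}"
proof -
  have "{x :: 'a. (m * x + b) ^ q + (m * x + b) = x ^ (q + 1)}
      = {x. (x - m ^ q) ^ (q + 1) = b ^ q + b + m ^ (q + 1)}"
    by (simp only: hermitian_nonvertical_iff)
  also have "\<dots> = (\<lambda>w. w + m ^ q) ` {w. w ^ (q + 1) = b ^ q + b + m ^ (q + 1)}"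
  proof (rule equalityI; rule subsetI)
    fix x
    assume "x \<in> {x. (x - m ^ q) ^ (q + 1) = b ^ q + b + m ^ (q + 1)}"
    then show "x \<in> (\<lambda>w. w + m ^ q) ` {w. w ^ (q + 1) = b ^ q + b + m ^ (q + 1)}"
      by (intro image_eqI[of _ _ "x - m ^ q"]) simp_all
  qed auto
  finally show ?thesis .
qed

lemma card_pg_line_nonvertical_Int_hermitian_curve:
  "card (pg_line (- m, 1, - b) \<inter> hermitian_curve q) =
    (if b ^ q + b + m ^ (q + 1) = (0 :: 'a) then 1 else q + 1)"
proof -
  have "b ^ q + b + m ^ (q + 1) \<in> base_field q"
    by (intro base_field_add trace_in_base_field norm_in_base_field)
  moreover have "{w :: 'a. w ^ (q + 1) = 0} = {0}"
    by auto
  ultimately have "card {w. w ^ (q + 1) = b ^ q + b + m ^ (q + 1)} =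
      (if b ^ q + b + m ^ (q + 1) = 0 then 1 else q + 1)"
    using card_norm_fibre by auto
  then show ?thesis
    unfolding pg_line_nonvertical_Int_hermitian_curve hermitian_nonvertical_roots
    by (simp add: card_image inj_on_def)
qed

lemma pg_line_nonvertical_tangent:
  assumes "b ^ q + b + m ^ (q + 1) = (0 :: 'a)"
  shows "pg_line (- m, 1, - b) \<inter> hermitian_curve q = {proj_class (m ^ q, m * m ^ q + b, 1)}"
proof -
  have "{w :: 'a. w ^ (q + 1) = 0} = {0}"
    by auto
  then show ?thesis
    unfolding pg_line_nonvertical_Int_hermitian_curve hermitian_nonvertical_roots assms by simp
qed

lemma card_pg_line_vertical_Int_hermitian_curve:
  "card (pg_line (1, 0, - c) \<inter> hermitian_curve q) = q + 1" for c :: 'a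
proof -
  have "card {y. y ^ q + y = c ^ (q + 1)} = q"
    by (intro card_trace_fibre norm_in_base_field)
  then have "card ((\<lambda>y. proj_class (c, y, 1)) ` {y. y ^ q + y = c ^ (q + 1)}) = q"
    by (simp add: card_image inj_on_def)
  then show ?thesis
    unfolding pg_line_vertical_Int_hermitian_curve by (simp add: card_insert_if image_iff)
qed

lemma card_pg_line_Int_hermitian_curve:
  assumes "l \<in> (pg_lines :: ('a \<times> 'a \<times> 'a) set set set)"
  shows "card (l \<inter> hermitian_curve q) = 1 \<or> card (l \<inter> hermitian_curve q) = q + 1"
  using assms
  by (cases rule: pg_lines_cases)
    (simp_all add: card_pg_line_nonvertical_Int_hermitian_curve
      card_pg_line_vertical_Int_hermitian_curve pg_line_infinity_Int_hermitian_curve)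

lemma hermitian_affine_tangent:
  fixes x y :: 'a
  assumes "y ^ q + y = x ^ (q + 1)"
  shows "pg_line (- (x ^ q), 1, - (y - x ^ q * x)) \<inter> hermitian_curve q = {proj_class (x, y, 1)}"
proof -
  have "(y - x ^ q * x) ^ q + (y - x ^ q * x) + (x ^ q) ^ (q + 1) = y ^ q + y - x ^ (q + 1)"
    by (simp add: frobenius_diff power_mult_distrib frobenius_involution algebra_simps)
  with assms have "(y - x ^ q * x) ^ q + (y - x ^ q * x) + (x ^ q) ^ (q + 1) = 0"
    by simp
  from pg_line_nonvertical_tangent[OF this] show ?thesis
    by (simp add: frobenius_involution)
qed

lemma tangent_to_hermitian_curve_cases:
  assumes "l \<in> pg_lines" "l \<inter> hermitian_curve q = {P :: ('a \<times> 'a \<times> 'a) set}"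
  shows "P = proj_class (0, 1, 0) \<and> l = pg_line (0, 0, 1) \<or>
    (\<exists>x y. P = proj_class (x, y, 1) \<and> l = pg_line (- (x ^ q), 1, - (y - x ^ q * x)))"
  using assms(1)
proof (cases rule: pg_lines_cases)
  case (nonvertical m b)
  have "b ^ q + b + m ^ (q + 1) = 0"
  proof (rule ccontr)
    assume "b ^ q + b + m ^ (q + 1) \<noteq> 0"
    then have "card (l \<inter> hermitian_curve q) = q + 1"
      using card_pg_line_nonvertical_Int_hermitian_curve[of m b] nonvertical by simp
    with assms(2) two_le_q show False
      by simp
  qed
  then have "P = proj_class (m ^ q, m * m ^ q + b, 1)"
    using pg_line_nonvertical_tangent assms(2) nonvertical by simp
  then show ?thesis
    using nonvertical frobenius_involution[of m]
    by (intro disjI2 exI[of _ "m ^ q"] exI[of _ "m * m ^ q + b"]) simp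
next
  case (vertical c)
  then show ?thesis
    using card_pg_line_vertical_Int_hermitian_curve[of c] assms(2) two_le_q by simp
next
  case infinity
  then have "P = proj_class (0, 1, 0)"
    using assms(2) pg_line_infinity_Int_hermitian_curve[of q] by (metis singleton_inject)
  with infinity show ?thesis
    by simp
qed

lemma hermitian_curve_unique_tangent:
  assumes "P \<in> hermitian_curve q"
  shows "\<exists>!l. l \<in> pg_lines \<and> l \<inter> hermitian_curve q = {P :: ('a \<times> 'a \<times> 'a) set}"
proof -
  from assms consider
      (affine) x y where "P = proj_class (x, y, 1)" "y ^ q + y = x ^ (q + 1)"
    | (infinity) "P = proj_class (0, 1, 0)"
    unfolding hermitian_curve_def by auto
  then show ?thesis
  proof cases
    case affine
    show ?thesis
    proof (rule ex1I[of _ "pg_line (- (x ^ q), 1, - (y - x ^ q * x))"])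
      show "pg_line (- (x ^ q), 1, - (y - x ^ q * x)) \<in> pg_lines \<and>
          pg_line (- (x ^ q), 1, - (y - x ^ q * x)) \<inter> hermitian_curve q = {P}"
        using hermitian_affine_tangent[OF affine(2)] affine(1) by (simp add: pg_line_in_pg_lines)
    qed (use tangent_to_hermitian_curve_cases affine(1) in fastforce)
  next
    case infinity
    show ?thesis
    proof (rule ex1I[of _ "pg_line (0, 0, 1)"])
      show "pg_line (0, 0, 1) \<in> pg_lines \<and> pg_line (0, 0, 1) \<inter> hermitian_curve q = {P}"
        using pg_line_infinity_Int_hermitian_curve infinity by (simp add: pg_line_in_pg_lines)
    qed (use tangent_to_hermitian_curve_cases infinity in fastforce)
  qed
qed

lemma card_hermitian_curve: "card (hermitian_curve q :: ('a \<times> 'a \<times> 'a) set set) = q ^ 3 + 1"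
proof -
  define A where "A = (SIGMA x:UNIV. {y. y ^ q + y = (x :: 'a) ^ (q + 1)})"
  have fibre: "card {y. y ^ q + y = x ^ (q + 1)} = q" for x :: 'a
    by (intro card_trace_fibre norm_in_base_field)
  have "card A = (\<Sum>x\<in>UNIV. card {y. y ^ q + y = (x :: 'a) ^ (q + 1)})"
    unfolding A_def by (rule card_SigmaI) simp_all
  also have "\<dots> = q ^ 3"
    by (simp only: fibre) (simp add: card_UNIV_field power3_eq_cube power2_eq_square)
  finally have "card A = q ^ 3" .
  then have "card ((\<lambda>p. proj_class (fst p, snd p, 1)) ` A) = q ^ 3"
    by (simp add: card_image inj_on_def prod_eq_iff)
  moreover have "hermitian_curve q = insert (proj_class (0, 1, 0)) ((\<lambda>p. proj_class (fst p, snd p, 1)) ` A)"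
    unfolding hermitian_curve_def A_def by (force simp: image_iff)
  ultimately show ?thesis
    by (simp add: card_insert_if image_iff)
qed

text \<open>Every line through a point of the curve other than its tangent is a secant, and \<open>X\<close> meets
  that secant again.\<close>

lemma semioval_if_meets_secants:
  fixes X :: "('a \<times> 'a \<times> 'a) set set"
  assumes "X \<subseteq> hermitian_curve q" "X \<noteq> {}"
    and meets: "\<And>l P. l \<in> pg_lines \<Longrightarrow> card (l \<inter> hermitian_curve q) = q + 1 \<Longrightarrow>
      P \<in> l \<inter> hermitian_curve q \<Longrightarrow> X \<inter> (l \<inter> hermitian_curve q - {P}) \<noteq> {}"
  shows "semioval X"
  unfolding semioval_def
proof (intro conjI ballI)
  show "X \<noteq> {}" "X \<subseteq> pg_points"
    using assms(1,2) hermitian_curve_subset_pg_points by blast+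
  fix P
  assume "P \<in> X"
  then have P: "P \<in> hermitian_curve q"
    using assms(1) by blast
  have tangent_of_X: "X \<inter> l = {P}" if "l \<in> pg_lines" "l \<inter> hermitian_curve q = {P}" for l
    using that \<open>P \<in> X\<close> assms(1) by blast
  have tangent_of_curve: "l \<inter> hermitian_curve q = {P}" if "l \<in> pg_lines" "X \<inter> l = {P}" for l
  proof -
    have "P \<in> l \<inter> hermitian_curve q"
      using that(2) P by blast
    moreover have "card (l \<inter> hermitian_curve q) \<noteq> q + 1"
      using meets[OF that(1) _ \<open>P \<in> l \<inter> hermitian_curve q\<close>] that(2) by blast
    ultimately show ?thesis
      using card_pg_line_Int_hermitian_curve[OF that(1)] by (metis card_1_singletonE singletonD)
  qed
  from hermitian_curve_unique_tangent[OF P] tangent_of_X tangent_of_curve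
  show "\<exists>!t. t \<in> pg_lines \<and> X \<inter> t = {P}"
    by metis
qed

lemma exists_semioval_of_card:
  assumes "k \<le> q ^ 3 + 1" and bound: "8 * real (q ^ 3 + 1) * ln (real q) \<le> real k * real q"
  shows "\<exists>S :: ('a \<times> 'a \<times> 'a) set set. semioval S \<and> card S = k"
proof -
  let ?H = "hermitian_curve q :: ('a \<times> 'a \<times> 'a) set set"
  define secants where "secants = {l \<in> pg_lines. card (l \<inter> ?H) = q + 1}"
  define \<F> where "\<F> = (\<lambda>(l, P). l \<inter> ?H - {P}) ` (SIGMA l:secants. l \<inter> ?H)"
  have members: "F \<subseteq> ?H \<and> card F = q" if "F \<in> \<F>" for F
    using that by (auto simp: \<F>_def secants_def card_Diff_singleton)
  have "card \<F> \<le> card (SIGMA l:secants. l \<inter> ?H)"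
    unfolding \<F>_def by (rule card_image_le) simp
  also have "\<dots> = card secants * (q + 1)"
    by (simp add: secants_def)
  also have "\<dots> \<le> q ^ 6 * (q + 1)"
  proof -
    have "card secants \<le> card (pg_lines :: ('a \<times> 'a \<times> 'a) set set set)"
      unfolding secants_def by (intro card_mono) auto
    also have "\<dots> \<le> q ^ 6"
      using card_pg_lines_le[where 'a = 'a] by (simp add: card_UNIV_field flip: power_mult)
    finally show ?thesis
      by (rule mult_le_mono1)
  qed
  finally have "card \<F> * ((q ^ 3 + 1 - q) choose k) \<le> q ^ 6 * (q + 1) * ((q ^ 3 + 1 - q) choose k)"
    by (rule mult_le_mono1)
  also have "\<dots> < (q ^ 3 + 1) choose k"
  proof (rule power_mult_choose_diff_less_choose[OF two_le_q _ assms(1) bound])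
    show "q \<le> q ^ 3 + 1"
      using power_increasing[of 1 3 q] two_le_q by simp
  qed
  finally obtain X where X: "X \<subseteq> ?H" "card X = k" "\<forall>F\<in>\<F>. X \<inter> F \<noteq> {}"
    using ex_subset_meeting_all[of ?H \<F> q k] members by (auto simp: card_hermitian_curve)
  have "0 < ln (real q)"
    using two_le_q by simp
  then have "0 < 8 * real (q ^ 3 + 1) * ln (real q)"
    by (intro mult_pos_pos) (simp_all add: add_pos_nonneg)
  then have "X \<noteq> {}"
    using bound X(2) by auto
  have "semioval X"
  proof (rule semioval_if_meets_secants[OF X(1) \<open>X \<noteq> {}\<close>])
    fix l P
    assume "l \<in> pg_lines" "card (l \<inter> ?H) = q + 1" "P \<in> l \<inter> ?H"
    then have "l \<inter> ?H - {P} \<in> \<F>"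
      unfolding \<F>_def secants_def by force
    with X(3) show "X \<inter> (l \<inter> ?H - {P}) \<noteq> {}"
      by blast
  qed
  with X(2) show ?thesis
    by blast
qed

end

lemma ceiling_bound_imp_log_bound:
  fixes q k :: nat
  assumes "2 \<le> q"
    and "int (q ^ 2 - q + 1) * \<lceil>8 * (real q + 1) / (real q - 1) * ln (real q)\<rceil> \<le> int k"
  shows "8 * real (q ^ 3 + 1) * ln (real q) \<le> real k * real q"
proof -
  define E where "E = 8 * (real q + 1) / (real q - 1) * ln (real q)"
  have q: "2 \<le> real q" "0 \<le> ln (real q)"
    using assms(1) by simp_all
  have "q \<le> q ^ 2"
    by (simp add: power2_eq_square)
  then have "real (q ^ 2 - q + 1) = real q ^ 2 - real q + 1"
    by (simp add: of_nat_diff)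
  then have "8 * real (q ^ 3 + 1) * ln (real q) = real (q ^ 2 - q + 1) * E * (real q - 1)"
    using q by (simp add: E_def field_simps power2_eq_square power3_eq_cube)
  also have "\<dots> \<le> real (q ^ 2 - q + 1) * real_of_int \<lceil>E\<rceil> * (real q - 1)"
    using q by (intro mult_right_mono mult_left_mono le_of_int_ceiling) simp_all
  also have "\<dots> \<le> real k * (real q - 1)"
  proof -
    have "real_of_int (int (q ^ 2 - q + 1) * \<lceil>E\<rceil>) \<le> real_of_int (int k)"
      using assms(2) by (simp only: E_def of_int_le_iff)
    then show ?thesis
      using q by (intro mult_right_mono) simp_all
  qed
  also have "\<dots> \<le> real k * real q"
    by (simp add: mult_left_mono)
  finally show ?thesis .
qed

theorem mainTheorem8:
  fixes q k :: nat
  assumes "\<exists>p n. prime p \<and> n > 0 \<and> q = p ^ n"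
    and "odd q" and "q > 27"
    and "card (UNIV :: 'a::{field,finite} set) = q ^ 2"
    and "int (q ^ 2 - q + 1) * \<lceil>8 * (real q + 1) / (real q - 1) * ln (real q)\<rceil> \<le> int k"
    and "k \<le> q ^ 3 + 1"
  shows "\<exists>S :: ('a \<times> 'a \<times> 'a) set set. semioval S \<and> card S = k"
proof -
  obtain p n where "prime p" "q = p ^ n"
    using assms(1) by blast
  with assms(4) have "CHAR('a) = p"
    by (intro CHAR_eq_if_card_UNIV_prime_power[of p "n * 2"]) (simp_all add: power_mult)
  then have frobenius_add: "(x + y) ^ q = x ^ q + y ^ q" for x y :: 'a
    using \<open>prime p\<close> \<open>q = p ^ n\<close> by (intro freshmans_dream') simp_all
  have "2 \<le> q"
    using assms(3) by simp
  from exists_semioval_of_card[OF assms(4) frobenius_add assms(6)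
      ceiling_bound_imp_log_bound[OF this assms(5)]]
  show ?thesis .
qed

end
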